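(* For all integers $i,j$ the following hold (whenever every triple $(m',n',k')$ appearing as a subscript satisfies $m',n'\ge0$ and $0\le k'\le\min(m',n')$, as guaranteed by the stated hypotheses): (1) If $1\le k\le m-1$ and $k\le n$: $c_{m,n,k}(i,j)=c_{m-1,n,k}(i,j)+c_{m-1,n-1,k-1}(i,j-1)$. (2) If $1\le k\le m$ and $k\le n-1$: $c_{m,n,k}(i,j)=c_{m,n-1,k}(i,j)-c_{m-1,n-1,k-1}(i-1,j)$. (3) If $0\le k\le\min(m-1,n-1)$ and $i+j>k$: $c_{m,n,k}(i,j)=c_{m-1,n,k}(i-1,j)+c_{m,n-1,k}(i,j-1)$. (4) If $0\le k\le\min(m,n)-1$ and $i+j>k$: $c_{m,n,k}(i,j)=c_{m+1,n,k+1}(i,j)-c_{m,n+1,k+1}(i,j)$.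
   Context: Binomial coefficients $\binom{a}{b}$ equal $\frac{a!}{b!(a-b)!}$ when $0\le b\le a$ and $0$ otherwise. For integers $m,n\ge0$, $0\le k\le\min(m,n)$ and arbitrary integers $i,j$, define $c_{m,n,k}(i,j)=\sum_{l=0}^{k}(-1)^l\binom{i+j-k}{i-l}\binom{m-l}{k-l}\binom{n-k+l}{l}$ if $i+j\ge k$, and $c_{m,n,k}(i,j)=0$ if $i+j<k$. Equivalently, for $i+j\ge k$, $c_{m,n,k}(i,j)$ is the coefficient of $x^jy^i$ in $(x+y)^{i+j-k}(1-x)^{-(m-k+1)}(1+y)^{-(n-k+1)}$. (For $0\le i\le m$, $0\le j\le n$, $k\le i+j\le m+n-k$, this is the coordinate of $f^i\phi_m\otimes f^j\phi_n$ in the weight vector $f^{i+j-k}\phi_{m,n,k}$ of the copy of $V(m+n-2k)$ in $V(m)\otimes V(n)$ generated by the highest weight vector $\phi_{m,n,k}=\sum_{l=0}^{k}(-1)^l\binom{m-l}{k-l}\binom{n-k+l}{l} f^l\phi_m\otimes f^{k-l}\phi_n$.) *)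

theory Defs
  imports Main
begin

definition ibinom :: "int \<Rightarrow> int \<Rightarrow> int" where
  "ibinom a b = (if 0 \<le> b \<and> b \<le> a then int (nat a choose nat b) else 0)"

definition cc :: "nat \<Rightarrow> nat \<Rightarrow> nat \<Rightarrow> int \<Rightarrow> int \<Rightarrow> int" where
  "cc m n k i j =
     (if i + j < int k then 0
      else (\<Sum>l = 0..k. (-1) ^ l * ibinom (i + j - int k) (i - int l)
                         * ibinom (int m - int l) (int k - int l)
                         * ibinom (int n - int k + int l) (int l)))"

end

theory Submission
  imports Defs
begin

text \<open>Apply Pascal's rule to the binomial factors of the summand of \<open>c\<^sub>m\<^sub>,\<^sub>n\<^sub>,\<^sub>k(i,j)\<close>,
  termwise in \<open>l\<close>. The resulting pieces are summands of the smaller coefficients, possibly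
  after the shift \<open>l \<mapsto> l - 1\<close>, plus in (3) and (4) a difference \<open>H l - H (l - 1)\<close> that
  telescopes to zero because \<open>H\<close> vanishes outside the summation range.\<close>

lemma ibinom_eq_0: "b < 0 \<or> a < b \<Longrightarrow> ibinom a b = 0"
  unfolding ibinom_def by auto

lemma ibinom_pascal:
  assumes "a \<noteq> 0 \<or> b \<noteq> 0"
  shows "ibinom a b = ibinom (a - 1) b + ibinom (a - 1) (b - 1)"
proof -
  consider "b < 0 \<or> a < b" | "b = 0" | "0 < b" "b \<le> a" by linarith
  then show ?thesis
  proof cases
    case 1
    then show ?thesis by (auto simp: ibinom_eq_0)
  next
    case 2
    then show ?thesis using assms unfolding ibinom_def by auto
  next
    case 3
    then have "nat a choose nat b =
                 (nat (a - 1) choose nat (b - 1)) + (nat (a - 1) choose nat b)"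
      by (simp add: choose_reduce_nat nat_diff_distrib)
    then show ?thesis using 3 unfolding ibinom_def by auto
  qed
qed

definition alt_sign :: "int \<Rightarrow> int" where
  "alt_sign l = (if even l then 1 else -1)"

lemma alt_sign_of_nat: "alt_sign (int l) = (-1) ^ l"
  unfolding alt_sign_def by simp

lemma alt_sign_minus_one: "alt_sign (l - 1) = - alt_sign l"
  unfolding alt_sign_def by auto

text \<open>Integer parameters, so that every argument can be shifted without truncated subtraction.\<close>
definition cc_summand :: "int \<Rightarrow> int \<Rightarrow> int \<Rightarrow> int \<Rightarrow> int \<Rightarrow> int \<Rightarrow> int" where
  "cc_summand m n k i j l =
     alt_sign l * ibinom (i + j - k) (i - l) * ibinom (m - l) (k - l) * ibinom (n - k + l) l"

lemma cc_summand_eq_0: "l < 0 \<or> k < l \<Longrightarrow> cc_summand m n k i j l = 0"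
  unfolding cc_summand_def by (auto simp: ibinom_eq_0)

lemma cc_eq_sum_cc_summand:
  assumes "a \<le> 0" "int k \<le> b"
  shows "cc m n k i j = (\<Sum>l = a..b. cc_summand (int m) (int n) (int k) i j l)"
proof -
  let ?f = "cc_summand (int m) (int n) (int k) i j"
  have "(\<Sum>l = a..b. ?f l) = (\<Sum>l = 0..int k. ?f l)"
    by (rule sum.mono_neutral_right) (use assms in \<open>auto simp: cc_summand_eq_0\<close>)
  also have "\<dots> = (\<Sum>l = 0..k. ?f (int l))"
    using sum.reindex[of int "{0..k}" ?f] by (simp add: image_int_atLeastAtMost)
  finally have sum_eq: "(\<Sum>l = a..b. ?f l) = (\<Sum>l = 0..k. ?f (int l))" .
  show ?thesis
  proof (cases "i + j < int k")
    case True
    have "?f l = 0" for l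
    proof -
      have "ibinom (i + j - int k) (i - l) = 0"
        using True by (intro ibinom_eq_0) linarith
      then show ?thesis by (simp add: cc_summand_def)
    qed
    then show ?thesis using True by (simp add: cc_def)
  next
    case False
    then show ?thesis
      unfolding sum_eq cc_def by (simp add: cc_summand_def alt_sign_of_nat)
  qed
qed

lemma sum_shift_vanishing:
  fixes g :: "int \<Rightarrow> 'a::comm_monoid_add"
  assumes "a \<le> b" "g (a - 1) = 0" "g b = 0"
  shows "(\<Sum>l = a..b. g (l - 1)) = (\<Sum>l = a..b. g l)"
proof -
  have "(\<Sum>l = a..b. g (l - 1)) = (\<Sum>l = a - 1..b - 1. g l)"
    by (rule sum.reindex_bij_witness[where i = "\<lambda>l. l + 1" and j = "\<lambda>l. l - 1"]) auto
  also have "\<dots> = (\<Sum>l = a - 1..b. g l)"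
  proof -
    have "{a - 1..b} = insert b {a - 1..b - 1}" using assms(1) by auto
    then show ?thesis using assms(3) by simp
  qed
  also have "\<dots> = (\<Sum>l = a..b. g l)"
  proof -
    have "{a - 1..b} = insert (a - 1) {a..b}" using assms(1) by auto
    then show ?thesis using assms(2) by simp
  qed
  finally show ?thesis .
qed

lemma cc_summand_rec_m:
  assumes "m \<noteq> k"
  shows "cc_summand m n k i j l =
           cc_summand (m - 1) n k i j l + cc_summand (m - 1) (n - 1) (k - 1) i (j - 1) l"
  using ibinom_pascal[of "m - l" "k - l"] assms
  by (simp add: cc_summand_def algebra_simps)

lemma cc_summand_rec_n:
  assumes "n \<noteq> k"
  shows "cc_summand m n k i j l =
           cc_summand m (n - 1) k i j l - cc_summand (m - 1) (n - 1) (k - 1) (i - 1) j (l - 1)"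
  using ibinom_pascal[of "n - k + l" l] assms
  by (simp add: cc_summand_def alt_sign_minus_one algebra_simps)

lemma cc_summand_rec_ij:
  assumes "m \<noteq> k" "n \<noteq> k" "k < i + j"
  defines "h \<equiv> cc_summand (m - 1) (n - 1) (k - 1) (i - 1) (j - 1)"
  shows "cc_summand m n k i j l =
           cc_summand (m - 1) n k (i - 1) j l + cc_summand m (n - 1) k i (j - 1) l + h l - h (l - 1)"
  using ibinom_pascal[of "i + j - k" "i - l"] ibinom_pascal[of "m - l" "k - l"]
    ibinom_pascal[of "n - k + l" l] assms
  by (simp add: cc_summand_def alt_sign_minus_one algebra_simps)

lemma cc_summand_rec_k:
  assumes "m \<noteq> k" "n \<noteq> k" "k < i + j"
  defines "h \<equiv> cc_summand m n k (i - 1) j"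
  shows "cc_summand m n k i j l =
           cc_summand (m + 1) n (k + 1) i j l - cc_summand m (n + 1) (k + 1) i j l + h l - h (l - 1)"
  using ibinom_pascal[of "i + j - k" "i - l"] ibinom_pascal[of "m + 1 - l" "k + 1 - l"]
    ibinom_pascal[of "n - k + l" l] assms
  by (simp add: cc_summand_def alt_sign_minus_one algebra_simps)

lemma cc_rec_m:
  assumes "1 \<le> k" "k + 1 \<le> m" "k \<le> n"
  shows "cc m n k i j = cc (m - 1) n k i j + cc (m - 1) (n - 1) (k - 1) i (j - 1)"
proof -
  have "cc m n k i j = (\<Sum>l = 0..int k. cc_summand (int m) (int n) (int k) i j l)"
    by (rule cc_eq_sum_cc_summand) auto
  also have "\<dots> = (\<Sum>l = 0..int k. cc_summand (int m - 1) (int n) (int k) i j l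
                      + cc_summand (int m - 1) (int n - 1) (int k - 1) i (j - 1) l)"
    using assms by (intro sum.cong refl cc_summand_rec_m) auto
  also have "\<dots> = cc (m - 1) n k i j + cc (m - 1) (n - 1) (k - 1) i (j - 1)"
    using assms by (simp add: sum.distrib cc_eq_sum_cc_summand[of 0 _ "int k"] of_nat_diff)
  finally show ?thesis .
qed

lemma cc_rec_n:
  assumes "1 \<le> k" "k \<le> m" "k + 1 \<le> n"
  shows "cc m n k i j = cc m (n - 1) k i j - cc (m - 1) (n - 1) (k - 1) (i - 1) j"
proof -
  define g where "g = cc_summand (int m - 1) (int n - 1) (int k - 1) (i - 1) j"
  have "cc m n k i j = (\<Sum>l = 0..int k. cc_summand (int m) (int n) (int k) i j l)"
    by (rule cc_eq_sum_cc_summand) auto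
  also have "\<dots> = (\<Sum>l = 0..int k. cc_summand (int m) (int n - 1) (int k) i j l - g (l - 1))"
    using assms unfolding g_def by (intro sum.cong refl cc_summand_rec_n) auto
  also have "\<dots> = (\<Sum>l = 0..int k. cc_summand (int m) (int n - 1) (int k) i j l)
                   - (\<Sum>l = 0..int k. g l)"
    by (simp add: sum_subtractf sum_shift_vanishing g_def cc_summand_eq_0)
  also have "\<dots> = cc m (n - 1) k i j - cc (m - 1) (n - 1) (k - 1) (i - 1) j"
    using assms by (simp add: g_def cc_eq_sum_cc_summand[of 0 _ "int k"] of_nat_diff)
  finally show ?thesis .
qed

lemma cc_rec_ij:
  assumes "k + 1 \<le> m" "k + 1 \<le> n" "int k < i + j"
  shows "cc m n k i j = cc (m - 1) n k (i - 1) j + cc m (n - 1) k i (j - 1)"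
proof -
  define h where "h = cc_summand (int m - 1) (int n - 1) (int k - 1) (i - 1) (j - 1)"
  have telescope: "(\<Sum>l = 0..int k. h l - h (l - 1)) = 0"
    by (simp add: sum_subtractf sum_shift_vanishing h_def cc_summand_eq_0)
  have "cc m n k i j = (\<Sum>l = 0..int k. cc_summand (int m) (int n) (int k) i j l)"
    by (rule cc_eq_sum_cc_summand) auto
  also have "\<dots> = (\<Sum>l = 0..int k. cc_summand (int m - 1) (int n) (int k) (i - 1) j l
                      + cc_summand (int m) (int n - 1) (int k) i (j - 1) l + (h l - h (l - 1)))"
    using assms unfolding h_def by (intro sum.cong refl) (auto simp: cc_summand_rec_ij)
  also have "\<dots> = cc (m - 1) n k (i - 1) j + cc m (n - 1) k i (j - 1)"
    using assms telescope
    by (simp add: sum.distrib cc_eq_sum_cc_summand[of 0 _ "int k"] of_nat_diff)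
  finally show ?thesis .
qed

lemma cc_rec_k:
  assumes "k + 1 \<le> min m n" "int k < i + j"
  shows "cc m n k i j = cc (m + 1) n (k + 1) i j - cc m (n + 1) (k + 1) i j"
proof -
  define h where "h = cc_summand (int m) (int n) (int k) (i - 1) j"
  have telescope: "(\<Sum>l = 0..int k + 1. h l - h (l - 1)) = 0"
    by (simp add: sum_subtractf sum_shift_vanishing h_def cc_summand_eq_0)
  have "cc m n k i j = (\<Sum>l = 0..int k + 1. cc_summand (int m) (int n) (int k) i j l)"
    by (rule cc_eq_sum_cc_summand) auto
  also have "\<dots> = (\<Sum>l = 0..int k + 1. cc_summand (int m + 1) (int n) (int k + 1) i j l
                      - cc_summand (int m) (int n + 1) (int k + 1) i j l + (h l - h (l - 1)))"
    using assms unfolding h_def by (intro sum.cong refl) (auto simp: cc_summand_rec_k)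
  also have "\<dots> = cc (m + 1) n (k + 1) i j - cc m (n + 1) (k + 1) i j"
    using telescope cc_eq_sum_cc_summand[of 0 "k + 1" "int k + 1" "m + 1" n i j]
      cc_eq_sum_cc_summand[of 0 "k + 1" "int k + 1" m "n + 1" i j]
    by (simp add: sum.distrib sum_subtractf ac_simps)
  finally show ?thesis .
qed

theorem proposition7p3:
  fixes m n k :: nat and i j :: int
  shows "(1 \<le> k \<and> k + 1 \<le> m \<and> k \<le> n \<longrightarrow>
            cc m n k i j = cc (m - 1) n k i j + cc (m - 1) (n - 1) (k - 1) i (j - 1))
       \<and> (1 \<le> k \<and> k \<le> m \<and> k + 1 \<le> n \<longrightarrow>
            cc m n k i j = cc m (n - 1) k i j - cc (m - 1) (n - 1) (k - 1) (i - 1) j)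
       \<and> (k + 1 \<le> m \<and> k + 1 \<le> n \<and> i + j > int k \<longrightarrow>
            cc m n k i j = cc (m - 1) n k (i - 1) j + cc m (n - 1) k i (j - 1))
       \<and> (k + 1 \<le> min m n \<and> i + j > int k \<longrightarrow>
            cc m n k i j = cc (m + 1) n (k + 1) i j - cc m (n + 1) (k + 1) i j)"
  using cc_rec_m cc_rec_n cc_rec_ij cc_rec_k by blast

end
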